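(* Let $(\beta,\gamma)$ be antiferromagnetic and $\lambda>0$. Let $x^*>0$ be the unique positive solution of $x^*=\frac{1+\gamma\lambda(x^* )^2}{\beta+\lambda(x^* )^2}$, let $\omega(R)=\frac{1+\beta\gamma-\beta R-\gamma/R}{1-\beta\gamma}$ and $\omega^*=\omega(x^* )$. For $\tau>0$ let $I'_\tau=\big[x^*-2\tau\frac{|\omega^*|}{1-|\omega^*|},\,x^*+2\tau\frac{|\omega^*|}{1-|\omega^*|}\big]$, and for $R'>0$ let $\phi_{R'}(R)=\frac{1+\gamma\lambda RR'}{\beta+\lambda RR'}$. There exist constants $0<C_{\min}<C_{\max}<1$ and $\tau_0>0$ such that for all $\tau\in(0,\tau_0)$, all $R\in I'_\tau$ and all $R'\in[x^*-\tau,x^*+\tau]$: $$C_{\min}\leq|\phi_{R'}'(R)|\leq C_{\max},\qquad \omega(R)\leq C_{\max},\qquad \phi_{R'}(R)\in I'_\tau,$$ where $\phi_{R'}'$ denotes the derivative with respect to $R$.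
   Context: A pair $(\beta,\gamma)$ with $\beta,\gamma\geq0$ is antiferromagnetic if $\beta\gamma\in[0,1)$ and at least one is nonzero. *)

theory Defs
  imports "HOL-Analysis.Analysis"
begin

definition antiferromagnetic :: "real \<Rightarrow> real \<Rightarrow> bool" where
  "antiferromagnetic \<beta> \<gamma> \<longleftrightarrow> \<beta> \<ge> 0 \<and> \<gamma> \<ge> 0 \<and> 0 \<le> \<beta> * \<gamma> \<and> \<beta> * \<gamma> < 1 \<and> (\<beta> \<noteq> 0 \<or> \<gamma> \<noteq> 0)"

definition omega :: "real \<Rightarrow> real \<Rightarrow> real \<Rightarrow> real" where
  "omega \<beta> \<gamma> R = (1 + \<beta> * \<gamma> - \<beta> * R - \<gamma> / R) / (1 - \<beta> * \<gamma>)"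

definition phi :: "real \<Rightarrow> real \<Rightarrow> real \<Rightarrow> real \<Rightarrow> real \<Rightarrow> real" where
  "phi \<beta> \<gamma> lam R' R = (1 + \<gamma> * lam * R * R') / (\<beta> + lam * R * R')"

definition Iprime :: "real \<Rightarrow> real \<Rightarrow> real \<Rightarrow> real \<Rightarrow> real set" where
  "Iprime \<beta> \<gamma> xs \<tau> =
     (let w = \<bar>omega \<beta> \<gamma> xs\<bar> in {xs - 2 * \<tau> * w / (1 - w) .. xs + 2 * \<tau> * w / (1 - w)})"

end

theory Submission
  imports Defs
begin

(* At the fixed point xs we have (xs - gamma) (beta + lam xs^2) = 1 - beta gamma, which turns
   w = omega xs into lam xs (1 - beta gamma) / (beta + lam xs^2)^2, the absolute slope of phi_xs at xs;
   in particular 0 < w < 1.  Let c = 2 w / (1 - w), so that I'_tau = [xs - c tau, xs + c tau].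
   Since phi_R'(R) - xs = lam (1 - beta gamma) (xs^2 - R R') / ((beta + lam R R') (beta + lam xs^2)),
   the distance |phi_R'(R) - xs| is at most tau times a ratio that is continuous in (R, R') and
   equals w (1 + c) < c at (xs, xs).  Likewise |d/dR phi_R'(R)| and omega R are continuous with
   value w at (xs, xs).  All strict bounds thus hold near (xs, xs), in particular on the box
   I'_tau x [xs - tau, xs + tau] for small tau. *)

lemma antiferromagneticD:
  assumes "antiferromagnetic \<beta> \<gamma>"
  shows "0 \<le> \<beta>" and "0 \<le> \<gamma>" and "\<beta> * \<gamma> < 1" and "\<beta> \<noteq> 0 \<or> \<gamma> \<noteq> 0"
  using assms unfolding antiferromagnetic_def by auto

lemma deriv_phi:
  fixes \<beta> \<gamma> lam R R' :: real
  assumes "\<beta> + lam * R * R' \<noteq> 0"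
  shows "deriv (phi \<beta> \<gamma> lam R') R = - (lam * R' * (1 - \<beta> * \<gamma>) / (\<beta> + lam * R * R')\<^sup>2)"
proof -
  have "(phi \<beta> \<gamma> lam R' has_real_derivative
      (\<gamma> * lam * R' * (\<beta> + lam * R * R') - (1 + \<gamma> * lam * R * R') * (lam * R'))
        / (\<beta> + lam * R * R')\<^sup>2) (at R)"
    unfolding phi_def using assms by (auto intro!: derivative_eq_intros simp: power2_eq_square)
  then show ?thesis
    by (rule DERIV_imp_deriv[THEN trans]) (simp only: minus_divide_left, simp add: algebra_simps)
qed

lemma abs_deriv_phi:
  fixes \<beta> \<gamma> lam R R' :: real
  assumes "0 \<le> lam" and "\<beta> * \<gamma> \<le> 1" and "0 \<le> R'" and "\<beta> + lam * R * R' \<noteq> 0"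
  shows "\<bar>deriv (phi \<beta> \<gamma> lam R') R\<bar> = lam * R' * (1 - \<beta> * \<gamma>) / (\<beta> + lam * R * R')\<^sup>2"
  using assms by (simp add: deriv_phi)

lemma phi_diff:
  fixes \<beta> \<gamma> lam R R' S S' :: real
  assumes "\<beta> + lam * R * R' \<noteq> 0" and "\<beta> + lam * S * S' \<noteq> 0"
  shows "phi \<beta> \<gamma> lam R' R - phi \<beta> \<gamma> lam S' S
    = lam * (1 - \<beta> * \<gamma>) * (S * S' - R * R') / ((\<beta> + lam * R * R') * (\<beta> + lam * S * S'))"
  using assms unfolding phi_def by (simp add: diff_frac_eq algebra_simps)

lemma omega_less_one:
  fixes \<beta> \<gamma> R :: real
  assumes af: "antiferromagnetic \<beta> \<gamma>" and R: "R > 0"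
  shows "omega \<beta> \<gamma> R < 1"
proof -
  have K: "1 - \<beta> * \<gamma> > 0"
    using antiferromagneticD(3)[OF af] by simp
  have "0 < \<beta> * (R - \<gamma>)\<^sup>2 + \<gamma> * (1 - \<beta> * \<gamma>)"
  proof (cases "\<gamma> = 0")
    case True
    then have "\<beta> > 0"
      using antiferromagneticD(1,4)[OF af] by simp
    with True R show ?thesis by simp
  next
    case False
    then have "\<gamma> > 0"
      using antiferromagneticD(2)[OF af] by simp
    with antiferromagneticD(1)[OF af] K show ?thesis
      by (simp add: add_nonneg_pos)
  qed
  then have "(1 + \<beta> * \<gamma> - \<beta> * R) * R - \<gamma> < (1 - \<beta> * \<gamma>) * R"
    by (simp add: algebra_simps power2_eq_square)
  with R K show ?thesis
    unfolding omega_def by (simp add: field_simps)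
qed

lemma omega_at_fixed_point:
  fixes \<beta> \<gamma> lam x :: real
  assumes af: "antiferromagnetic \<beta> \<gamma>" and lam: "lam > 0" and x: "x > 0"
    and fixed: "phi \<beta> \<gamma> lam x x = x"
  shows "omega \<beta> \<gamma> x = lam * x * (1 - \<beta> * \<gamma>) / (\<beta> + lam * x * x)\<^sup>2"
proof -
  define K where "K = 1 - \<beta> * \<gamma>"
  define D where "D = \<beta> + lam * x * x"
  have K: "K > 0" and D: "D > 0"
    using antiferromagneticD[OF af] lam x unfolding K_def D_def by (auto intro: add_nonneg_pos)
  have "x * D = 1 + \<gamma> * lam * x * x"
    using fixed D unfolding phi_def D_def by (simp add: field_simps)
  then have gap: "x - \<gamma> = K / D" and beta_gap: "1 - \<beta> * x = lam * x * x * (x - \<gamma>)"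
    using D unfolding K_def D_def by (simp_all add: field_simps)
  have "omega \<beta> \<gamma> x = (1 - \<beta> * x) * (x - \<gamma>) / (x * K)"
    using x K unfolding omega_def K_def by (simp add: field_simps)
  also have "\<dots> = lam * x * K / D\<^sup>2"
    using x K D unfolding beta_gap gap by (simp add: field_simps power2_eq_square)
  finally show ?thesis unfolding K_def D_def .
qed

lemma omega_at_fixed_point_pos:
  fixes \<beta> \<gamma> lam x :: real
  assumes af: "antiferromagnetic \<beta> \<gamma>" and lam: "lam > 0" and x: "x > 0"
    and fixed: "phi \<beta> \<gamma> lam x x = x"
  shows "0 < omega \<beta> \<gamma> x"
proof -
  have "1 - \<beta> * \<gamma> > 0" and "\<beta> + lam * x * x > 0"
    using antiferromagneticD[OF af] lam x by (auto intro: add_nonneg_pos)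
  with lam x show ?thesis
    unfolding omega_at_fixed_point[OF assms] by simp
qed

lemma mem_Iprime_iff:
  "R \<in> Iprime \<beta> \<gamma> xs \<tau> \<longleftrightarrow>
    \<bar>R - xs\<bar> \<le> 2 * \<bar>omega \<beta> \<gamma> xs\<bar> / (1 - \<bar>omega \<beta> \<gamma> xs\<bar>) * \<tau>"
  unfolding Iprime_def Let_def by (auto simp: abs_le_iff algebra_simps)

lemma eventually_at_right_shrinking_boxes:
  fixes a b c :: real
  assumes "\<forall>\<^sub>F (u, v) in nhds (a, b). P u v"
  shows "\<forall>\<^sub>F \<tau> in at_right 0. \<forall>u v. \<bar>u - a\<bar> \<le> c * \<tau> \<longrightarrow> \<bar>v - b\<bar> \<le> \<tau> \<longrightarrow> P u v"
proof -
  obtain d where "d > 0" and d: "\<And>u v. dist (u, v) (a, b) < d \<Longrightarrow> P u v"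
    using assms unfolding eventually_nhds_metric by force
  have "P u v" if "0 < \<tau>" "\<tau> < d / (\<bar>c\<bar> + 1)" "\<bar>u - a\<bar> \<le> c * \<tau>" "\<bar>v - b\<bar> \<le> \<tau>" for \<tau> u v
  proof (rule d)
    have "dist (u, v) (a, b) \<le> \<bar>u - a\<bar> + \<bar>v - b\<bar>"
      using sqrt_sum_squares_le_sum_abs by (simp add: dist_Pair_Pair dist_real_def)
    also have "\<dots> \<le> (\<bar>c\<bar> + 1) * \<tau>"
      using that mult_right_mono[OF abs_ge_self[of c] less_imp_le[OF that(1)]]
      unfolding distrib_right by linarith
    also have "\<dots> < d"
      using that by (simp add: field_simps)
    finally show "dist (u, v) (a, b) < d" .
  qed
  then show ?thesis
    unfolding eventually_at_right_field using \<open>d > 0\<close>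
    by (intro exI[of _ "d / (\<bar>c\<bar> + 1)"]) auto
qed

lemma phi_dist_fixed_point_le:
  fixes \<beta> \<gamma> lam x R R' c \<tau> :: real
  assumes lam: "0 \<le> lam" and bg: "\<beta> * \<gamma> \<le> 1" and x: "0 \<le> x" and R': "0 \<le> R'"
    and fixed: "phi \<beta> \<gamma> lam x x = x"
    and D: "0 < \<beta> + lam * R * R'" and D0: "0 < \<beta> + lam * x * x"
    and R_near: "\<bar>R - x\<bar> \<le> c * \<tau>" and R'_near: "\<bar>R' - x\<bar> \<le> \<tau>"
  shows "\<bar>phi \<beta> \<gamma> lam R' R - x\<bar>
    \<le> \<tau> * (lam * (1 - \<beta> * \<gamma>) * (c * R' + x) / ((\<beta> + lam * R * R') * (\<beta> + lam * x * x)))"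
proof -
  define M where "M = lam * (1 - \<beta> * \<gamma>) / ((\<beta> + lam * R * R') * (\<beta> + lam * x * x))"
  have M: "M \<ge> 0"
    using lam bg D D0 unfolding M_def by simp
  have "\<bar>x * x - R * R'\<bar> = \<bar>(x - R) * R' + x * (x - R')\<bar>"
    by (simp add: algebra_simps)
  also have "\<dots> \<le> \<bar>R - x\<bar> * R' + x * \<bar>R' - x\<bar>"
    using R' x abs_triangle_ineq[of "(x - R) * R'" "x * (x - R')"]
    by (simp add: abs_mult abs_minus_commute)
  also have "\<dots> \<le> c * \<tau> * R' + x * \<tau>"
    using R_near R'_near R' x by (intro add_mono mult_right_mono mult_left_mono)
  finally have product_near: "\<bar>x * x - R * R'\<bar> \<le> \<tau> * (c * R' + x)"
    by (simp add: algebra_simps)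
  have "phi \<beta> \<gamma> lam R' R - x = M * (x * x - R * R')"
    using phi_diff[of \<beta> lam R R' x x \<gamma>] D D0 fixed unfolding M_def by simp
  then have "\<bar>phi \<beta> \<gamma> lam R' R - x\<bar> = M * \<bar>x * x - R * R'\<bar>"
    using M by (simp add: abs_mult)
  also have "\<dots> \<le> M * (\<tau> * (c * R' + x))"
    using product_near M by (rule mult_left_mono)
  finally show ?thesis
    unfolding M_def by (simp add: ac_simps)
qed

lemma eventually_nhds_fixed_point_bounds:
  fixes \<beta> \<gamma> lam x :: real
  assumes af: "antiferromagnetic \<beta> \<gamma>" and lam: "lam > 0" and x: "x > 0"
    and fixed: "phi \<beta> \<gamma> lam x x = x"
  defines "w \<equiv> omega \<beta> \<gamma> x"
  defines "c \<equiv> 2 * w / (1 - w)"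
  shows "\<forall>\<^sub>F (R, R') in nhds (x, x). 0 < R' \<and> 0 < \<beta> + lam * R * R' \<and>
    w / 2 < \<bar>deriv (phi \<beta> \<gamma> lam R') R\<bar> \<and> \<bar>deriv (phi \<beta> \<gamma> lam R') R\<bar> < (1 + w) / 2 \<and>
    omega \<beta> \<gamma> R < (1 + w) / 2 \<and>
    lam * (1 - \<beta> * \<gamma>) * (c * R' + x) / ((\<beta> + lam * R * R') * (\<beta> + lam * x * x)) < c"
proof -
  define K where "K = 1 - \<beta> * \<gamma>"
  define D0 where "D0 = \<beta> + lam * x * x"
  have K: "K > 0" and D0: "D0 > 0"
    using antiferromagneticD[OF af] lam x unfolding K_def D0_def by (auto intro: add_nonneg_pos)
  have w_eq: "w = lam * x * K / D0\<^sup>2"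
    using omega_at_fixed_point[OF af lam x fixed] unfolding w_def K_def D0_def .
  have w_pos: "0 < w" and w_less: "w < 1"
    using omega_at_fixed_point_pos[OF af lam x fixed] omega_less_one[OF af x] unfolding w_def .
  have ratio_at_x: "lam * K * (c * x + x) / (D0 * D0) = w * (c + 1)"
    unfolding w_eq by (simp add: power2_eq_square algebra_simps)
  have "w * (c + 1) = w * (1 + w) / (1 - w)"
    using w_less unfolding c_def by (simp add: field_simps)
  also have "\<dots> < c"
    using w_pos w_less unfolding c_def by (intro divide_strict_right_mono) auto
  finally have contraction: "w * (c + 1) < c" .
  let ?D = "\<lambda>p :: real \<times> real. \<beta> + lam * fst p * snd p"
  have ident: "((\<lambda>p. p) \<longlongrightarrow> (x, x)) (nhds (x, x))"
    by (rule filterlim_ident)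
  have D_lim: "(?D \<longlongrightarrow> D0) (nhds (x, x))"
    unfolding D0_def by (auto intro!: tendsto_eq_intros ident)
  have snd_lim: "(snd \<longlongrightarrow> x) (nhds (x, x))"
    by (auto intro!: tendsto_eq_intros ident)
  have slope_lim: "((\<lambda>p. lam * snd p * K / (?D p)\<^sup>2) \<longlongrightarrow> w) (nhds (x, x))"
    unfolding w_eq using D0 by (auto intro!: tendsto_eq_intros ident simp: D0_def)
  have omega_lim: "((\<lambda>p. omega \<beta> \<gamma> (fst p)) \<longlongrightarrow> w) (nhds (x, x))"
    unfolding w_def omega_def using x K unfolding K_def
    by (auto intro!: tendsto_eq_intros ident)
  have ratio_lim: "((\<lambda>p. lam * K * (c * snd p + x) / (?D p * D0)) \<longlongrightarrow> w * (c + 1)) (nhds (x, x))"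
    unfolding ratio_at_x[symmetric] using D0 by (auto intro!: tendsto_eq_intros ident simp: D0_def)
  have "\<forall>\<^sub>F p in nhds (x, x). 0 < snd p \<and> 0 < ?D p \<and>
      w / 2 < lam * snd p * K / (?D p)\<^sup>2 \<and> lam * snd p * K / (?D p)\<^sup>2 < (1 + w) / 2 \<and>
      omega \<beta> \<gamma> (fst p) < (1 + w) / 2 \<and> lam * K * (c * snd p + x) / (?D p * D0) < c"
    using w_pos w_less contraction
    by (intro eventually_conj order_tendstoD(1)[OF snd_lim x] order_tendstoD(1)[OF D_lim D0]
        order_tendstoD(1)[OF slope_lim] order_tendstoD(2)[OF slope_lim]
        order_tendstoD(2)[OF omega_lim] order_tendstoD(2)[OF ratio_lim]) auto
  then show ?thesis
    by (rule eventually_mono) (use K in \<open>auto simp: abs_deriv_phi lam less_imp_le K_def D0_def\<close>)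
qed

lemma eventually_at_right_fixed_point_estimates:
  fixes \<beta> \<gamma> lam x :: real
  assumes af: "antiferromagnetic \<beta> \<gamma>" and lam: "lam > 0" and x: "x > 0"
    and fixed: "phi \<beta> \<gamma> lam x x = x"
  defines "w \<equiv> omega \<beta> \<gamma> x"
  shows "\<forall>\<^sub>F \<tau> in at_right 0. \<forall>R \<in> Iprime \<beta> \<gamma> x \<tau>. \<forall>R' \<in> {x - \<tau> .. x + \<tau>}.
    w / 2 \<le> \<bar>deriv (phi \<beta> \<gamma> lam R') R\<bar> \<and> \<bar>deriv (phi \<beta> \<gamma> lam R') R\<bar> \<le> (1 + w) / 2 \<and>
    omega \<beta> \<gamma> R \<le> (1 + w) / 2 \<and> phi \<beta> \<gamma> lam R' R \<in> Iprime \<beta> \<gamma> x \<tau>"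
proof -
  define c where "c = 2 * w / (1 - w)"
  have "0 < w" "w < 1"
    using omega_at_fixed_point_pos[OF af lam x fixed] omega_less_one[OF af x] unfolding w_def by auto
  then have Iprime: "R \<in> Iprime \<beta> \<gamma> x \<tau> \<longleftrightarrow> \<bar>R - x\<bar> \<le> c * \<tau>" for R \<tau>
    using mem_Iprime_iff unfolding w_def c_def by simp
  have bg: "\<beta> * \<gamma> \<le> 1" and D0: "0 < \<beta> + lam * x * x"
    using antiferromagneticD[OF af] lam x by (auto intro: add_nonneg_pos)
  show ?thesis
    using eventually_at_right_less[of 0] eventually_at_right_shrinking_boxes[where c = c,
        OF eventually_nhds_fixed_point_bounds[OF af lam x fixed, folded w_def, folded c_def]]
  proof eventually_elim
    case (elim \<tau>)
    have "phi \<beta> \<gamma> lam R' R \<in> Iprime \<beta> \<gamma> x \<tau>" if near: "\<bar>R - x\<bar> \<le> c * \<tau>" "\<bar>R' - x\<bar> \<le> \<tau>" for R R'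
    proof -
      have R': "0 < R'" and D: "0 < \<beta> + lam * R * R'"
        and ratio: "lam * (1 - \<beta> * \<gamma>) * (c * R' + x) / ((\<beta> + lam * R * R') * (\<beta> + lam * x * x)) < c"
        using elim(2)[rule_format, OF near] by blast+
      have "\<bar>phi \<beta> \<gamma> lam R' R - x\<bar>
          \<le> \<tau> * (lam * (1 - \<beta> * \<gamma>) * (c * R' + x) / ((\<beta> + lam * R * R') * (\<beta> + lam * x * x)))"
        by (rule phi_dist_fixed_point_le[OF less_imp_le[OF lam] bg less_imp_le[OF x] less_imp_le[OF R']
              fixed D D0 near])
      also have "\<dots> \<le> \<tau> * c"
        using ratio elim(1) by (intro mult_left_mono) auto
      finally show ?thesis
        by (simp add: Iprime mult.commute)
    qed
    moreover have "\<bar>R - x\<bar> \<le> c * \<tau>" "\<bar>R' - x\<bar> \<le> \<tau>"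
      if "R \<in> Iprime \<beta> \<gamma> x \<tau>" and "R' \<in> {x - \<tau> .. x + \<tau>}" for R R'
      using that by (auto simp: Iprime)
    ultimately show ?case
      using elim(2) by (blast intro: less_imp_le)
  qed
qed

theorem lemma3p3:
  fixes \<beta> \<gamma> lam xs :: real
  assumes af: "antiferromagnetic \<beta> \<gamma>"
    and lam: "lam > 0"
    and xs_pos: "xs > 0"
    and xs_fix: "xs = (1 + \<gamma> * lam * xs\<^sup>2) / (\<beta> + lam * xs\<^sup>2)"
    and xs_unique: "\<And>x. x > 0 \<Longrightarrow> x = (1 + \<gamma> * lam * x\<^sup>2) / (\<beta> + lam * x\<^sup>2) \<Longrightarrow> x = xs"
  shows "\<exists>Cmin Cmax \<tau>0. 0 < Cmin \<and> Cmin < Cmax \<and> Cmax < 1 \<and> \<tau>0 > 0 \<and>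
    (\<forall>\<tau>. 0 < \<tau> \<and> \<tau> < \<tau>0 \<longrightarrow>
      (\<forall>R \<in> Iprime \<beta> \<gamma> xs \<tau>. \<forall>R' \<in> {xs - \<tau> .. xs + \<tau>}.
         Cmin \<le> \<bar>deriv (phi \<beta> \<gamma> lam R') R\<bar> \<and>
         \<bar>deriv (phi \<beta> \<gamma> lam R') R\<bar> \<le> Cmax \<and>
         omega \<beta> \<gamma> R \<le> Cmax \<and>
         phi \<beta> \<gamma> lam R' R \<in> Iprime \<beta> \<gamma> xs \<tau>))"
proof -
  have fixed: "phi \<beta> \<gamma> lam xs xs = xs"
    using xs_fix by (simp add: phi_def power2_eq_square mult.assoc)
  define w where "w = omega \<beta> \<gamma> xs"
  have "0 < w / 2" and "w / 2 < (1 + w) / 2" and "(1 + w) / 2 < 1"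
    using omega_at_fixed_point_pos[OF af lam xs_pos fixed] omega_less_one[OF af xs_pos]
    unfolding w_def by auto
  with eventually_at_right_fixed_point_estimates[OF af lam xs_pos fixed, folded w_def]
  show ?thesis
    unfolding eventually_at_right_field by blast
qed

end
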